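(* For every positive integer $n$ and every string $u$ of length $n$ over a finite alphabet, the sum of the exponents of all cubic runs in $u$ is less than $2.5\,n$.
   Context: For a word $u=u_1\cdots u_m$, the (shortest) period is the smallest positive integer $p$ with $u_i=u_{i+p}$ for all $1\le i\le m-p$; $u[i..j]=u_i\cdots u_j$. A run in $u$ is an interval $[i..j]$ such that the period $p$ of $u[i..j]$ satisfies $2p\le j-i+1$, and $u[i-1]\ne u[i+p-1]$ (or $i=1$) and $u[j-p+1]\ne u[j+1]$ (or $j=|u|$). Its exponent is $(j-i+1)/p$. A cubic run is a run $[i..j]$ whose shortest period $p$ satisfies $3p\le j-i+1$. *)

theory Defs
  imports Complex_Main
begin

text \<open>Words are lists; positions are 1-based as in the paper: letter k of u is u ! (k - 1).\<close>

definition letter :: "'a list \<Rightarrow> nat \<Rightarrow> 'a" where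
  "letter u k = u ! (k - 1)"

definition is_period :: "'a list \<Rightarrow> nat \<Rightarrow> nat \<Rightarrow> nat \<Rightarrow> bool" where
  "is_period u i j p \<longleftrightarrow> 0 < p \<and>
     (\<forall>k. i \<le> k \<and> k + p \<le> j \<longrightarrow> letter u k = letter u (k + p))"

definition per :: "'a list \<Rightarrow> nat \<Rightarrow> nat \<Rightarrow> nat" where
  "per u i j = (LEAST p. is_period u i j p)"

definition is_run :: "'a list \<Rightarrow> nat \<Rightarrow> nat \<Rightarrow> bool" where
  "is_run u i j \<longleftrightarrow> 1 \<le> i \<and> i \<le> j \<and> j \<le> length u \<and>
     2 * per u i j \<le> j - i + 1 \<and>
     (i = 1 \<or> letter u (i - 1) \<noteq> letter u (i + per u i j - 1)) \<and>
     (j = length u \<or> letter u (j - per u i j + 1) \<noteq> letter u (j + 1))"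

definition exponent :: "'a list \<Rightarrow> nat \<Rightarrow> nat \<Rightarrow> real" where
  "exponent u i j = real (j - i + 1) / real (per u i j)"

definition is_cubic_run :: "'a list \<Rightarrow> nat \<Rightarrow> nat \<Rightarrow> bool" where
  "is_cubic_run u i j \<longleftrightarrow> is_run u i j \<and> 3 * per u i j \<le> j - i + 1"

definition cubic_runs :: "'a list \<Rightarrow> (nat \<times> nat) set" where
  "cubic_runs u = {(i, j). is_cubic_run u i j}"

end

theory Submission
  imports Defs "HOL-Library.List_Lexorder"
begin

text \<open>Lyndon roots, after Bannai et al. Give every run the order on the letters in which the letter
  following the run is smaller than the letter one period before it, and mark the positions, other
  than the start of the run, where the minimal conjugate of its period (its Lyndon root) occurs.
  A run of exponent e has at least \<lfloor>e\<rfloor> - 1 marks, all in {2..n}, and no position is marked by two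
  runs. Runs of equal period sharing a full period coincide by maximality. A Lyndon root of length
  at least 2 is preceded by a larger letter, one of length 1 by an equal letter, so runs of
  different periods marking the same position use the same order; then the
  Lyndon root of the run with the longer period cannot overhang the end of the other run, since the
  smaller letter after that run would give a smaller conjugate, and inside it would be invariant
  under the shorter period. For a cubic run e < \<lfloor>e\<rfloor> + 1 \<le> 2(\<lfloor>e\<rfloor> - 1), so the exponents of the cubic
  runs sum to at most 2(n - 1).\<close>

lemma list_less_iff_nth:
  fixes xs ys :: "'a::ord list"
  assumes "length xs = length ys"
  shows "xs < ys \<longleftrightarrow> (\<exists>d<length xs. (\<forall>k<d. xs ! k = ys ! k) \<and> xs ! d < ys ! d)"
proof -
  have "take d xs = take d ys \<longleftrightarrow> (\<forall>k<d. xs ! k = ys ! k)" if "d < length xs" for d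
    using that assms by (simp add: list_eq_iff_nth_eq)
  then show ?thesis
    unfolding list_less_def lexord_take_index_conv using assms by auto
qed

lemma append_le_append_iff:
  fixes xs ys zs :: "'a::linorder list"
  shows "xs @ ys \<le> xs @ zs \<longleftrightarrow> ys \<le> zs"
  by (induction xs) auto

lemma hd_le_nth_of_min_rotation:
  fixes xs :: "'a::linorder list"
  assumes min: "\<And>k. xs \<le> rotate k xs" and k: "k < length xs"
  shows "hd xs \<le> xs ! k"
proof (rule ccontr)
  assume "\<not> hd xs \<le> xs ! k"
  moreover have "rotate k xs ! 0 = xs ! k" using nth_rotate[of 0 xs k] k by fastforce
  moreover have "xs ! 0 = hd xs" using k by (cases xs) auto
  ultimately have "rotate k xs < xs"
    unfolding list_less_iff_nth[OF length_rotate] using k by (intro exI[of _ 0]) auto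
  with min[of k] show False by simp
qed

text \<open>The minimal conjugate of a non-constant word starts with a letter smaller than its last one:
  otherwise the conjugate starting with its last letter would be smaller.\<close>

lemma hd_less_last_of_min_rotation:
  fixes xs :: "'a::linorder list"
  assumes min: "\<And>k. xs \<le> rotate k xs" and nonconst: "x \<in> set xs" "x \<noteq> hd xs"
  shows "hd xs < last xs"
proof -
  define n where "n = length xs"
  have n: "0 < n" using nonconst(1) by (auto simp: n_def)
  note hd_le = hd_le_nth_of_min_rotation[OF min, folded n_def]
  have "\<exists>d<n. xs ! d \<noteq> hd xs" using nonconst by (auto simp: in_set_conv_nth n_def)
  then obtain d where d: "d < n \<and> xs ! d \<noteq> hd xs"
    and least: "\<forall>k<d. \<not> (k < n \<and> xs ! k \<noteq> hd xs)"
    by (subst (asm) exists_least_iff) blast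
  have "last xs \<noteq> hd xs"
  proof
    assume last_hd: "last xs = hd xs"
    have shifted: "rotate (n - 1) xs ! k = hd xs" if "k \<le> d" for k
    proof (cases k)
      case 0
      then show ?thesis using n last_hd by (simp add: nth_rotate last_conv_nth n_def)
    next
      case (Suc k')
      then have "(n - 1 + k) mod n = k'" using that d by simp
      then show ?thesis using nth_rotate[of k xs "n - 1"] least Suc that d by (simp add: n_def)
    qed
    have "rotate (n - 1) xs < xs"
      unfolding list_less_iff_nth[OF length_rotate]
    proof (intro exI[of _ d] conjI allI impI)
      show "d < length (rotate (n - 1) xs)" using d by (simp add: n_def)
      show "rotate (n - 1) xs ! k = xs ! k" if "k < d" for k
        using shifted[of k] least that d by auto
      have "hd xs < xs ! d" using hd_le[of d] d le_neq_trans[of "hd xs" "xs ! d"] by auto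
      then show "rotate (n - 1) xs ! d < xs ! d" using shifted[of d] by simp
    qed
    with min[of "n - 1"] show False by simp
  qed
  with hd_le[of "n - 1"] n show ?thesis by (simp add: last_conv_nth n_def)
qed

lemma is_period_iterate:
  assumes "is_period u i j p" "i \<le> k" "k + m * p \<le> j"
  shows "letter u (k + m * p) = letter u k"
  using assms(3)
proof (induction m)
  case (Suc m)
  have "letter u (k + m * p + p) = letter u (k + m * p)"
    using assms(1,2) Suc.prems unfolding is_period_def by auto
  with Suc show ?case by (simp add: algebra_simps)
qed simp

lemma is_period_per: "i \<le> j \<Longrightarrow> is_period u i j (per u i j)"
  unfolding per_def by (rule LeastI[of _ "j - i + 1"]) (auto simp: is_period_def)

lemma per_le: "is_period u i j q \<Longrightarrow> per u i j \<le> q"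
  unfolding per_def by (rule Least_le)

lemma per_pos: "i \<le> j \<Longrightarrow> 0 < per u i j"
  using is_period_per is_period_def by blast

definition wrap :: "nat \<Rightarrow> nat \<Rightarrow> nat \<Rightarrow> nat" where
  "wrap i p x = i + (x - i) mod p"

lemma wrap_ge: "i \<le> wrap i p x"
  by (simp add: wrap_def)

lemma wrap_less: "0 < p \<Longrightarrow> wrap i p x < i + p"
  by (simp add: wrap_def)

lemma wrap_wrap_add:
  assumes "i \<le> x"
  shows "wrap i p (wrap i p x + k) = wrap i p (x + k)"
proof -
  have "x + k - i = (x - i) + k" using assms by simp
  then show ?thesis by (simp add: wrap_def mod_add_left_eq)
qed

lemma wrap_add_period: "i \<le> x \<Longrightarrow> wrap i p (x + p) = wrap i p x"
  by (simp add: wrap_def) (metis Nat.add_diff_assoc2 mod_add_self2)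

lemma wrap_surj:
  assumes "0 < p" "i \<le> y" "i \<le> z"
  obtains k where "k < p" "wrap i p (z + k) = wrap i p y"
proof
  define t where "t = (z - i) mod p"
  define k where "k = ((y - i) mod p + p - t) mod p"
  have "t < p" using assms(1) by (simp add: t_def)
  have "(z + k - i) mod p = (t + k) mod p"
    using assms(3) by (simp add: t_def mod_add_left_eq)
  also have "\<dots> = (t + ((y - i) mod p + p - t)) mod p" by (simp add: k_def mod_add_right_eq)
  also have "t + ((y - i) mod p + p - t) = (y - i) mod p + p" using \<open>t < p\<close> by simp
  finally show "wrap i p (z + k) = wrap i p y" by (simp add: wrap_def)
  show "k < p" using assms(1) by (simp add: k_def)
qed

lemma letter_wrap:
  assumes "is_period u i j p" "i \<le> y" "y \<le> j"
  shows "letter u (wrap i p y) = letter u y"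
proof -
  have "y = wrap i p y + ((y - i) div p) * p"
    using assms(2) by (simp add: wrap_def)
  then show ?thesis
    using is_period_iterate[OF assms(1) wrap_ge[of i p y], of "(y - i) div p"] assms(3) by metis
qed

text \<open>With f injective on the letters of u, the letters of u are compared through code f u b in
  the order induced by f (b = True) or in its reverse (b = False).\<close>

definition code :: "('a \<Rightarrow> nat) \<Rightarrow> 'a list \<Rightarrow> bool \<Rightarrow> nat \<Rightarrow> int" where
  "code f u b k = (if b then int (f (letter u k)) else - int (f (letter u k)))"

lemma code_eq_of_letter_eq: "letter u k = letter u k' \<Longrightarrow> code f u b k = code f u b k'"
  by (simp add: code_def)

lemma letter_eq_of_code_eq:
  assumes "inj_on f (set u)" "1 \<le> k" "k \<le> length u" "1 \<le> k'" "k' \<le> length u"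
    and "code f u b k = code f u b k'"
  shows "letter u k = letter u k'"
proof -
  have "letter u k \<in> set u" "letter u k' \<in> set u"
    using assms(2-5) by (auto simp: letter_def)
  moreover have "f (letter u k) = f (letter u k')"
    using assms(6) by (cases b) (auto simp: code_def)
  ultimately show ?thesis using assms(1) by (meson inj_onD)
qed

text \<open>The conjugate of the root of a p-periodic factor starting at i, read from position x.\<close>

definition rotation :: "('a \<Rightarrow> nat) \<Rightarrow> 'a list \<Rightarrow> bool \<Rightarrow> nat \<Rightarrow> nat \<Rightarrow> nat \<Rightarrow> int list" where
  "rotation f u b i p x = map (\<lambda>k. code f u b (wrap i p (x + k))) [0..<p]"

lemma length_rotation [simp]: "length (rotation f u b i p x) = p"
  by (simp add: rotation_def)

lemma nth_rotation: "k < p \<Longrightarrow> rotation f u b i p x ! k = code f u b (wrap i p (x + k))"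
  by (simp add: rotation_def)

lemma nth_rotation_in_period:
  assumes "is_period u i j p" "k < p" "i \<le> x" "x + k \<le> j"
  shows "rotation f u b i p x ! k = code f u b (x + k)"
  using nth_rotation[OF assms(2)] letter_wrap[OF assms(1), of "x + k"] assms(3,4)
  by (metis code_eq_of_letter_eq le_add1 le_trans)

lemma rotation_wrap: "i \<le> x \<Longrightarrow> rotation f u b i p (wrap i p x) = rotation f u b i p x"
  by (simp add: rotation_def wrap_wrap_add)

lemma rotation_add:
  assumes "i \<le> x"
  shows "rotation f u b i p (x + k) = rotate k (rotation f u b i p x)"
proof (rule nth_equalityI)
  fix n assume "n < length (rotation f u b i p (x + k))"
  then have n: "n < p" by simp
  have "x + (k + n) mod p - i = (x - i) + (k + n) mod p" "x + k + n - i = (x - i) + (k + n)"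
    using assms by simp_all
  then have "wrap i p (x + (k + n) mod p) = wrap i p (x + k + n)"
    unfolding wrap_def by (simp add: mod_add_right_eq)
  then show "rotation f u b i p (x + k) ! n = rotate k (rotation f u b i p x) ! n"
    using n by (simp add: nth_rotation nth_rotate add.assoc)
qed simp

lemma rotation_lessI:
  assumes "d < p" "\<And>k. k < d \<Longrightarrow> rotation f u b i p x ! k = rotation f u b i' p y ! k"
    and "rotation f u b i p x ! d < rotation f u b i' p y ! d"
  shows "rotation f u b i p x < rotation f u b i' p y"
  using assms by (subst list_less_iff_nth) auto

lemma is_period_1_of_constant_window:
  assumes P: "is_period u i j p" and inj: "inj_on f (set u)" and bounds: "1 \<le> i" "j \<le> length u"
    and ia: "i \<le> a" and aj: "a + p \<le> j + 1"
    and const: "\<And>k. k < p \<Longrightarrow> code f u b (a + k) = c"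
  shows "is_period u i j 1"
proof -
  have p: "0 < p" using P by (simp add: is_period_def)
  have code_c: "code f u b y = c" if y: "i \<le> y" "y \<le> j" for y
  proof -
    obtain t where t: "t < p" "wrap i p (a + t) = wrap i p y"
      by (rule wrap_surj[OF p y(1) ia])
    have "letter u y = letter u (wrap i p y)" using letter_wrap[OF P y] by simp
    also have "\<dots> = letter u (a + t)" using t letter_wrap[OF P, of "a + t"] ia aj by auto
    finally show ?thesis using const[OF t(1)] code_eq_of_letter_eq by metis
  qed
  show ?thesis unfolding is_period_def
  proof (intro conjI allI impI)
    fix k assume "i \<le> k \<and> k + 1 \<le> j"
    then show "letter u k = letter u (k + 1)"
      by (intro letter_eq_of_code_eq[OF inj, where b = b]) (use code_c bounds in auto)
  qed simp
qed

lemma code_descent_at_min_rotation: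
  assumes P: "is_period u i j p" and inj: "inj_on f (set u)" and bounds: "1 \<le> i" "j \<le> length u"
    and not1: "\<not> is_period u i j 1"
    and min: "\<And>y. i \<le> y \<Longrightarrow> rotation f u b i p a \<le> rotation f u b i p y"
    and ia: "i < a" and aj: "a + p \<le> j + 1"
  shows "code f u b a < code f u b (a - 1)"
proof -
  define xs where "xs = rotation f u b i p a"
  have p: "0 < p" using P by (simp add: is_period_def)
  have len: "length xs = p" by (simp add: xs_def)
  then have ne: "xs \<noteq> []" using p by auto
  have xs_nth: "xs ! k = code f u b (a + k)" if "k < p" for k
    unfolding xs_def using nth_rotation_in_period[OF P that] that ia aj by simp
  have "\<exists>x\<in>set xs. x \<noteq> hd xs"
  proof (rule ccontr)
    assume "\<not> (\<exists>x\<in>set xs. x \<noteq> hd xs)"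
    then have const: "code f u b (a + k) = hd xs" if "k < p" for k
      using xs_nth[OF that] nth_mem[of k xs] that by (auto simp: xs_def)
    have "is_period u i j 1"
      using ia by (intro is_period_1_of_constant_window[OF P inj bounds _ aj const]) simp_all
    with not1 show False ..
  qed
  moreover have "xs \<le> rotate k xs" for k
    using min[of "a + k"] rotation_add[of i a f u b p k] ia by (simp add: xs_def)
  ultimately have "hd xs < last xs" using hd_less_last_of_min_rotation by metis
  moreover have "hd xs = code f u b a"
    using xs_nth[of 0] p ne by (simp add: hd_conv_nth)
  moreover have "last xs = code f u b (a - 1)"
  proof -
    have "letter u (a - 1 + 1 * p) = letter u (a - 1)"
      using is_period_iterate[OF P, of "a - 1" 1] ia aj by simp
    moreover have "a - 1 + 1 * p = a + (p - 1)" using ia p by simp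
    ultimately have "code f u b (a + (p - 1)) = code f u b (a - 1)"
      by (metis code_eq_of_letter_eq)
    then show ?thesis using xs_nth[of "p - 1"] p len ne by (simp add: last_conv_nth)
  qed
  ultimately show ?thesis by simp
qed

lemma is_period_of_rotation_shift:
  assumes P: "is_period u i j q" and inj: "inj_on f (set u)"
    and bounds: "1 \<le> i" "j \<le> length u" "i + q \<le> j + 1" and ia: "i \<le> a" and p: "0 < p"
    and shift: "rotation f u b i q (a + p) = rotation f u b i q a"
  shows "is_period u i j p"
  unfolding is_period_def
proof (intro conjI allI impI)
  have q: "0 < q" using P by (simp add: is_period_def)
  fix y assume y: "i \<le> y \<and> y + p \<le> j"
  obtain k where k: "k < q" "wrap i q (a + k) = wrap i q y"
    by (rule wrap_surj[where y = y, OF q _ ia]) (use y in simp)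
  have k_shift: "wrap i q (a + p + k) = wrap i q (y + p)"
    using wrap_wrap_add[of i "a + k" q p] wrap_wrap_add[of i y q p] k y ia by (simp add: add_ac)
  have "code f u b (wrap i q (a + p + k)) = code f u b (wrap i q (a + k))"
    using shift nth_rotation[OF k(1)] by (metis add.assoc)
  moreover have "1 \<le> wrap i q z" "wrap i q z \<le> length u" for z
    using wrap_ge[of i q z] wrap_less[OF q, of i z] bounds by linarith+
  ultimately have "letter u (wrap i q (a + p + k)) = letter u (wrap i q (a + k))"
    using letter_eq_of_code_eq[OF inj] by blast
  then show "letter u y = letter u (y + p)"
    using k k_shift letter_wrap[OF P, of y] letter_wrap[OF P, of "y + p"] y by auto
qed (use p in simp)

lemma rotation_nested_split:
  fixes f :: "'a \<Rightarrow> nat" and b :: bool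
  assumes P: "is_period u i j p" and P': "is_period u i' j' p'"
    and ia: "i \<le> a" and ia': "i' \<le> a" and aj: "a + p' \<le> j + 1" and aj': "a + p' \<le> j' + 1"
    and pp: "p \<le> p'"
  shows "rotation f u b i' p' a =
    map (\<lambda>k. code f u b (a + k)) [0..<p' - p] @ rotation f u b i p (a + (p' - p))"
    (is "_ = ?w @ _")
proof (rule nth_equalityI)
  show "length (rotation f u b i' p' a) = length (?w @ rotation f u b i p (a + (p' - p)))"
    using pp by simp
  fix k assume "k < length (rotation f u b i' p' a)"
  then have k: "k < p'" by simp
  have "(?w @ rotation f u b i p (a + (p' - p))) ! k = code f u b (a + k)"
  proof (cases "k < p' - p")
    case False
    then have t: "k - (p' - p) < p" using k by simp
    then show ?thesis
      using nth_rotation_in_period[OF P t, of "a + (p' - p)"] False ia aj k by (simp add: nth_append)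
  qed (simp add: nth_append)
  then show "rotation f u b i' p' a ! k = (?w @ rotation f u b i p (a + (p' - p))) ! k"
    using nth_rotation_in_period[OF P' k] ia' aj' k by simp
qed

lemma rotation_shift_nested_split:
  fixes f :: "'a \<Rightarrow> nat" and b :: bool
  assumes P: "is_period u i j p" and P': "is_period u i' j' p'"
    and ia: "i \<le> a" and ia': "i' \<le> a" and aj: "a + p' \<le> j + 1" and aj': "a + p' \<le> j' + 1"
    and pp: "p \<le> p'"
  shows "rotation f u b i' p' (a + p) =
    map (\<lambda>k. code f u b (a + k)) [0..<p' - p] @ rotation f u b i p a"
    (is "_ = ?w @ _")
proof (rule nth_equalityI)
  show "length (rotation f u b i' p' (a + p)) = length (?w @ rotation f u b i p a)"
    using pp by simp
  fix k assume "k < length (rotation f u b i' p' (a + p))"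
  then have k: "k < p'" by simp
  show "rotation f u b i' p' (a + p) ! k = (?w @ rotation f u b i p a) ! k"
  proof (cases "k < p' - p")
    case True
    have "letter u (a + k + 1 * p) = letter u (a + k)"
      using is_period_iterate[OF P, of "a + k" 1] ia True aj by simp
    then have "code f u b (a + p + k) = code f u b (a + k)"
      by (metis add.commute add.left_commute code_eq_of_letter_eq mult_1)
    then show ?thesis
      using nth_rotation_in_period[OF P' k, of "a + p"] True ia' aj' by (simp add: nth_append)
  next
    case False
    define t where "t = k - (p' - p)"
    have t: "t < p" "a + p + k = a + t + p'" using False k pp by (simp_all add: t_def)
    have "rotation f u b i' p' (a + p) ! k = code f u b (wrap i' p' (a + t))"
      using nth_rotation[OF k, of f u b i' "a + p"] t(2) wrap_add_period[of i' "a + t" p'] ia'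
      by simp
    also have "\<dots> = code f u b (a + t)"
      using letter_wrap[OF P', of "a + t"] t pp ia' aj' code_eq_of_letter_eq by simp
    also have "\<dots> = (?w @ rotation f u b i p a) ! k"
      using nth_rotation_in_period[OF P t(1), of a] t pp ia aj False
      by (simp add: nth_append t_def)
    finally show ?thesis .
  qed
qed

text \<open>By the two splits, comparing the longer conjugate with its shift by p amounts to comparing two
  conjugates of the shorter period, one of which is minimal.\<close>

lemma rotation_shift_of_nested_min:
  assumes P: "is_period u i j p" and P': "is_period u i' j' p'"
    and ia: "i \<le> a" and ia': "i' \<le> a" and aj: "a + p' \<le> j + 1" and aj': "a + p' \<le> j' + 1"
    and pp: "p \<le> p'"
    and min: "\<And>y. i \<le> y \<Longrightarrow> rotation f u b i p a \<le> rotation f u b i p y"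
    and min': "\<And>y. i' \<le> y \<Longrightarrow> rotation f u b i' p' a \<le> rotation f u b i' p' y"
  shows "rotation f u b i' p' (a + p) = rotation f u b i' p' a"
proof -
  note split = rotation_nested_split[OF P P' ia ia' aj aj' pp, where f = f and b = b]
    rotation_shift_nested_split[OF P P' ia ia' aj aj' pp, where f = f and b = b]
  have "rotation f u b i p (a + (p' - p)) \<le> rotation f u b i p a"
    using min'[of "a + p"] ia' unfolding split by (simp add: append_le_append_iff)
  moreover have "rotation f u b i p a \<le> rotation f u b i p (a + (p' - p))"
    using min ia by simp
  ultimately show ?thesis unfolding split by simp
qed

lemma last_multiple_le:
  fixes c x p :: nat
  assumes "c \<le> x" "0 < p"
  obtains m where "c + m * p \<le> x" "x < c + m * p + p"
proof
  define m where "m = (x - c) div p"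
  have "m * p \<le> x - c" unfolding m_def by (rule div_times_less_eq_dividend)
  then show "c + m * p \<le> x" using assms(1) by simp
  have "x - c = m * p + (x - c) mod p" by (simp add: m_def)
  then show "x < c + m * p + p" using mod_less_divisor[OF assms(2), of "x - c"] assms(1) by linarith
qed

lemma min_rotation_within_run:
  assumes P: "is_period u i j p" and P': "is_period u i' j' p'" and j': "j' \<le> length u"
    and min': "\<And>y. i' \<le> y \<Longrightarrow> rotation f u b i' p' a \<le> rotation f u b i' p' y"
    and ia: "i \<le> a" and aj: "a + p \<le> j + 1" and ia': "i' \<le> a" and aj': "a + p' \<le> j' + 1"
    and right: "j < length u \<Longrightarrow> code f u b (j + 1) < code f u b (j + 1 - p)"
  shows "a + p' \<le> j + 1"
proof (rule ccontr)
  assume overhang: "\<not> a + p' \<le> j + 1"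
  then have right': "code f u b (j + 1) < code f u b (j + 1 - p)" using right aj' j' by simp
  have p: "0 < p" using P by (simp add: is_period_def)
  text \<open>The conjugate starting at the last occurrence s of the period before position j + 1 agrees
    with the one starting at a up to offset d, where it reads the smaller letter j + 1.\<close>
  obtain m where m: "a + p + m * p \<le> j + 1" "j + 1 < a + p + m * p + p"
    using last_multiple_le[OF aj p] by blast
  define s where "s = a + p + m * p"
  define d where "d = j + 1 - s"
  have dp: "d < p" and sd: "s + d = j + 1" using m by (simp_all add: s_def d_def)
  have rot_s: "rotation f u b i' p' s ! k = code f u b (s + k)" if "k \<le> d" for k
    using nth_rotation_in_period[OF P', of k s] that dp sd overhang ia' aj' by (simp add: s_def)
  have rot_a: "rotation f u b i' p' a ! k = code f u b (a + k)" if "k \<le> d" for k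
    using nth_rotation_in_period[OF P', of k a] that dp sd overhang ia' aj' by (simp add: s_def)
  have "rotation f u b i' p' s < rotation f u b i' p' a"
  proof (rule rotation_lessI[of d])
    show "d < p'" using dp overhang aj by simp
    fix k assume k: "k < d"
    have "letter u (a + k + Suc m * p) = letter u (a + k)"
      using is_period_iterate[OF P, of "a + k" "Suc m"] ia k sd by (simp add: s_def add_ac)
    then have "code f u b (s + k) = code f u b (a + k)"
      by (metis add.commute add.left_commute code_eq_of_letter_eq mult_Suc s_def)
    then show "rotation f u b i' p' s ! k = rotation f u b i' p' a ! k"
      using rot_s[of k] rot_a[of k] k by simp
  next
    have "a + d + m * p = j + 1 - p" using sd by (simp add: s_def)
    then have "letter u (j + 1 - p) = letter u (a + d)"
      using is_period_iterate[OF P, of "a + d" m] ia dp sd p by (simp add: s_def)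
    then have "code f u b (j + 1 - p) = code f u b (a + d)" by (rule code_eq_of_letter_eq)
    then show "rotation f u b i' p' s ! d < rotation f u b i' p' a ! d"
      using rot_s[of d] rot_a[of d] right' sd by simp
  qed
  moreover have "rotation f u b i' p' a \<le> rotation f u b i' p' s"
    using ia' by (intro min') (simp add: s_def)
  ultimately show False by simp
qed

lemma is_runD:
  assumes "is_run u i j"
  shows "is_period u i j (per u i j)" "1 \<le> i" "j \<le> length u" "i \<le> j" "0 < per u i j"
  using assms is_period_per per_pos unfolding is_run_def by auto

lemma finite_runs: "finite {(i, j). is_run u i j}"
  by (rule finite_subset[of _ "{1..length u} \<times> {1..length u}"]) (auto simp: is_run_def)

lemma run_start_le:
  assumes r: "is_run u i j" and r': "is_run u i' j'" and pp: "per u i' j' = per u i j"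
    and ia': "i' \<le> a" and aj: "a + per u i j \<le> j + 1"
  shows "i' \<le> i"
proof (rule ccontr)
  assume lt: "\<not> i' \<le> i"
  then have "letter u (i' - 1 + 1 * per u i j) = letter u (i' - 1)"
    using is_period_iterate[OF is_runD(1)[OF r], of "i' - 1" 1] ia' aj by simp
  moreover have "letter u (i' - 1) \<noteq> letter u (i' + per u i j - 1)"
    using r r' pp lt unfolding is_run_def by auto
  ultimately show False using lt is_runD(2)[OF r] by (simp add: add.commute)
qed

lemma run_end_le:
  assumes r: "is_run u i j" and r': "is_run u i' j'" and pp: "per u i' j' = per u i j"
    and ia': "i' \<le> a" and aj: "a + per u i j \<le> j + 1"
  shows "j' \<le> j"
proof (rule ccontr)
  assume lt: "\<not> j' \<le> j"
  have "per u i j \<le> j" using aj is_runD(2)[OF r'] ia' by linarith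
  moreover have "letter u (j + 1 - per u i j + 1 * per u i j) = letter u (j + 1 - per u i j)"
    using is_period_iterate[OF is_runD(1)[OF r'], of "j + 1 - per u i j" 1] pp lt ia' aj by simp
  moreover have "letter u (j - per u i j + 1) \<noteq> letter u (j + 1)"
    using r r' lt unfolding is_run_def by auto
  ultimately show False by (simp add: Suc_diff_le)
qed

lemma run_eq_of_per_eq:
  assumes r: "is_run u i j" and r': "is_run u i' j'" and pp: "per u i' j' = per u i j"
    and ia: "i \<le> a" and ia': "i' \<le> a" and aj: "a + per u i j \<le> j + 1" and aj': "a + per u i j \<le> j' + 1"
  shows "i' = i" "j' = j"
  using run_start_le[OF r r' pp ia' aj] run_start_le[OF r' r _ ia] run_end_le[OF r r' pp ia' aj]
    run_end_le[OF r' r _ ia] pp aj' by simp_all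

text \<open>The paper's choice of order for the run [i..j]: the one in which the letter following the
  run is smaller than the letter one period before it. Here b = True selects the order induced by f.\<close>

definition orient :: "('a \<Rightarrow> nat) \<Rightarrow> 'a list \<Rightarrow> nat \<Rightarrow> nat \<Rightarrow> bool" where
  "orient f u i j \<longleftrightarrow> j = length u \<or> f (letter u (j + 1)) < f (letter u (j + 1 - per u i j))"

definition run_rotation :: "('a \<Rightarrow> nat) \<Rightarrow> 'a list \<Rightarrow> nat \<Rightarrow> nat \<Rightarrow> nat \<Rightarrow> int list" where
  "run_rotation f u i j = rotation f u (orient f u i j) i (per u i j)"

definition min_rotation :: "('a \<Rightarrow> nat) \<Rightarrow> 'a list \<Rightarrow> nat \<Rightarrow> nat \<Rightarrow> int list" where
  "min_rotation f u i j = Min (run_rotation f u i j ` {i..<i + per u i j})"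

text \<open>Starting positions other than i of occurrences of the Lyndon root of the run, i.e.\ of the
  minimal conjugate of its period in the chosen order.\<close>

definition lyndon_starts :: "('a \<Rightarrow> nat) \<Rightarrow> 'a list \<Rightarrow> nat \<Rightarrow> nat \<Rightarrow> nat set" where
  "lyndon_starts f u i j =
     {a. i < a \<and> a + per u i j \<le> j + 1 \<and> run_rotation f u i j a = min_rotation f u i j}"

lemma min_rotation_le:
  assumes "i \<le> j" "i \<le> y"
  shows "min_rotation f u i j \<le> run_rotation f u i j y"
proof -
  have "run_rotation f u i j y = run_rotation f u i j (wrap i (per u i j) y)"
    unfolding run_rotation_def using rotation_wrap assms(2) by metis
  moreover have "wrap i (per u i j) y \<in> {i..<i + per u i j}"
    using wrap_ge wrap_less[OF per_pos[OF assms(1)]] by auto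
  ultimately show ?thesis unfolding min_rotation_def by simp
qed

lemma min_rotation_attained:
  assumes "i \<le> j"
  obtains a0 where "i \<le> a0" "a0 < i + per u i j" "run_rotation f u i j a0 = min_rotation f u i j"
proof -
  have "min_rotation f u i j \<in> run_rotation f u i j ` {i..<i + per u i j}"
    unfolding min_rotation_def by (rule Min_in) (use per_pos[OF assms] in auto)
  then show thesis using that by auto
qed

lemma lyndon_start_min:
  assumes "is_run u i j" "a \<in> lyndon_starts f u i j" "i \<le> y"
  shows "run_rotation f u i j a \<le> run_rotation f u i j y"
  using assms min_rotation_le[OF is_runD(4)[OF assms(1)]] by (simp add: lyndon_starts_def)

lemma code_after_run:
  assumes inj: "inj_on f (set u)" and r: "is_run u i j" and jn: "j < length u"
  shows "code f u (orient f u i j) (j + 1) < code f u (orient f u i j) (j + 1 - per u i j)"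
proof (cases "orient f u i j")
  case True
  then show ?thesis using jn by (simp add: orient_def code_def)
next
  case False
  have p: "per u i j \<le> j" using r is_runD(5)[OF r] unfolding is_run_def by linarith
  have "letter u (j + 1 - per u i j) \<noteq> letter u (j + 1)"
    using r jn p unfolding is_run_def by (simp add: Suc_diff_le)
  moreover have "letter u (j + 1 - per u i j) \<in> set u" "letter u (j + 1) \<in> set u"
    using r jn p unfolding is_run_def letter_def by auto
  ultimately have "f (letter u (j + 1 - per u i j)) \<noteq> f (letter u (j + 1))"
    using inj by (meson inj_onD)
  then show ?thesis using False jn by (auto simp: orient_def code_def)
qed

lemma code_descent_at_lyndon_start:
  assumes inj: "inj_on f (set u)" and r: "is_run u i j" and a: "a \<in> lyndon_starts f u i j"
    and p2: "2 \<le> per u i j"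
  shows "code f u (orient f u i j) a < code f u (orient f u i j) (a - 1)"
proof (rule code_descent_at_min_rotation[OF is_runD(1)[OF r] inj is_runD(2,3)[OF r]])
  show "\<not> is_period u i j 1" using per_le[of u i j 1] p2 by auto
  show "rotation f u (orient f u i j) i (per u i j) a \<le> rotation f u (orient f u i j) i (per u i j) y"
    if "i \<le> y" for y
    using lyndon_start_min[OF r a that] by (simp add: run_rotation_def)
qed (use a in \<open>auto simp: lyndon_starts_def\<close>)

lemma letter_before_lyndon_start_per_1:
  assumes r: "is_run u i j" and a: "a \<in> lyndon_starts f u i j" and p1: "per u i j = 1"
  shows "letter u (a - 1) = letter u a"
proof -
  have "letter u (a - 1 + 1 * 1) = letter u (a - 1)"
    using is_period_iterate[OF is_runD(1)[OF r, unfolded p1], of "a - 1" 1] a p1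
    by (auto simp: lyndon_starts_def)
  then show ?thesis using a by (auto simp: lyndon_starts_def)
qed

lemma lyndon_starts_same_orient_per_eq:
  assumes inj: "inj_on f (set u)" and r: "is_run u i j" and r': "is_run u i' j'"
    and a: "a \<in> lyndon_starts f u i j" and a': "a \<in> lyndon_starts f u i' j'"
    and b: "orient f u i' j' = orient f u i j" and pp: "per u i j \<le> per u i' j'"
  shows "per u i' j' = per u i j"
proof (rule ccontr)
  assume "per u i' j' \<noteq> per u i j"
  with pp have lt: "per u i j < per u i' j'" by simp
  define b where "b = orient f u i j"
  note P = is_runD(1)[OF r] and P' = is_runD(1)[OF r']
  have min: "rotation f u b i (per u i j) a \<le> rotation f u b i (per u i j) y" if "i \<le> y" for y
    using lyndon_start_min[OF r a that] by (simp add: run_rotation_def b_def)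
  have min': "rotation f u b i' (per u i' j') a \<le> rotation f u b i' (per u i' j') y"
    if "i' \<le> y" for y
    using lyndon_start_min[OF r' a' that] b by (simp add: run_rotation_def b_def)
  have win: "i < a" "a + per u i j \<le> j + 1" "i' < a" "a + per u i' j' \<le> j' + 1"
    using a a' by (auto simp: lyndon_starts_def)
  have "a + per u i' j' \<le> j + 1"
    by (rule min_rotation_within_run[OF P P' is_runD(3)[OF r'] min'])
      (use win code_after_run[OF inj r] in \<open>auto simp: b_def\<close>)
  then have shift: "rotation f u b i' (per u i' j') (a + per u i j) = rotation f u b i' (per u i' j') a"
    using rotation_shift_of_nested_min[OF P P' _ _ _ _ _ min min'] win lt by simp
  have "is_period u i' j' (per u i j)"
    by (rule is_period_of_rotation_shift[OF P' inj is_runD(2,3)[OF r'] _ _ _ shift])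
      (use win is_runD(5)[OF r] in simp_all)
  then have "per u i' j' \<le> per u i j" by (rule per_le)
  with lt show False by simp
qed

lemma lyndon_starts_disjoint:
  assumes inj: "inj_on f (set u)" and r: "is_run u i j" and r': "is_run u i' j'"
    and a: "a \<in> lyndon_starts f u i j" and a': "a \<in> lyndon_starts f u i' j'"
  shows "i' = i \<and> j' = j"
proof (cases "per u i' j' = per u i j")
  case True
  have "i \<le> a" "i' \<le> a" "a + per u i j \<le> j + 1" "a + per u i j \<le> j' + 1"
    using a a' True by (auto simp: lyndon_starts_def)
  then show ?thesis using run_eq_of_per_eq[OF r r' True] by simp
next
  case False
  have orient: "orient f u i' j' = (\<not> orient f u i j)"
  proof (rule ccontr)
    assume "orient f u i' j' \<noteq> (\<not> orient f u i j)"
    then have "orient f u i' j' = orient f u i j" by blast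
    with lyndon_starts_same_orient_per_eq[OF inj r r' a a'] lyndon_starts_same_orient_per_eq[OF inj r' r a' a]
    have "per u i' j' = per u i j" by (metis nat_le_linear)
    with False show False ..
  qed
  text \<open>A period-1 run repeats the letter before a; any other run descends at a in its own order,
    and two descents in opposite orders are incompatible.\<close>
  have repeat: "code f u c (a - 1) = code f u c a" if "per u i j = 1" for c
    using code_eq_of_letter_eq[OF letter_before_lyndon_start_per_1[OF r a that]] .
  have repeat': "code f u c (a - 1) = code f u c a" if "per u i' j' = 1" for c
    using code_eq_of_letter_eq[OF letter_before_lyndon_start_per_1[OF r' a' that]] .
  have descent: "code f u (orient f u i j) a < code f u (orient f u i j) (a - 1)"
    if "per u i j \<noteq> 1"
    using code_descent_at_lyndon_start[OF inj r a] that is_runD(5)[OF r] by simp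
  have descent': "code f u (orient f u i' j') a < code f u (orient f u i' j') (a - 1)"
    if "per u i' j' \<noteq> 1"
    using code_descent_at_lyndon_start[OF inj r' a'] that is_runD(5)[OF r'] by simp
  consider "per u i j = 1" | "per u i' j' = 1" | "per u i j \<noteq> 1" "per u i' j' \<noteq> 1" by blast
  then have False
  proof cases
    case 1
    then show False using repeat descent' False by fastforce
  next
    case 2
    then show False using repeat' descent False by fastforce
  next
    case 3
    then show False
      using descent descent' orient by (cases "orient f u i j") (auto simp: code_def)
  qed
  then show ?thesis ..
qed

lemma lyndon_starts_subset:
  assumes "is_run u i j"
  shows "lyndon_starts f u i j \<subseteq> {2..length u}"
  using is_runD[OF assms] by (auto simp: lyndon_starts_def)

lemma card_lyndon_starts:
  assumes r: "is_run u i j"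
  shows "(j - i + 1) div per u i j - 1 \<le> card (lyndon_starts f u i j)"
proof -
  define p where "p = per u i j"
  define q where "q = (j - i + 1) div p"
  have p: "0 < p" using is_runD(5)[OF r] by (simp add: p_def)
  have qp: "q * p \<le> j - i + 1" unfolding q_def by (rule div_times_less_eq_dividend)
  obtain a0 where a0: "i \<le> a0" "a0 < i + p" "run_rotation f u i j a0 = min_rotation f u i j"
    using min_rotation_attained[OF is_runD(4)[OF r]] by (auto simp: p_def)
  text \<open>The occurrences a1, a1 + p, a1 + 2p, ... of the Lyndon root, where a1 is the first one
    after i.\<close>
  define a1 where "a1 = (if a0 = i then i + p else a0)"
  have a1: "i < a1" "a1 \<le> i + p" "(a1 - i) mod p = a0 - i"
    using a0 p by (auto simp: a1_def)
  define g where "g t = a1 + t * p" for t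
  have sub: "g ` {..<q - 1} \<subseteq> lyndon_starts f u i j"
  proof
    fix x assume "x \<in> g ` {..<q - 1}"
    then obtain t where t: "t < q - 1" "x = g t" by auto
    have "(t + 1) * p \<le> (q - 1) * p" using t by (intro mult_le_mono1) simp
    also have "(q - 1) * p = q * p - p" by (simp add: diff_mult_distrib)
    finally have "x + p \<le> j + 1" using t a1 qp by (simp add: g_def)
    moreover have "wrap i p x = a0"
    proof -
      have "(x - i) mod p = ((a1 - i) + t * p) mod p" using a1 by (simp add: t g_def)
      also have "\<dots> = a0 - i" unfolding mod_mult_self1 by (rule a1(3))
      finally show ?thesis using a0 by (simp add: wrap_def)
    qed
    then have "run_rotation f u i j x = min_rotation f u i j"
      using rotation_wrap[of i x f u "orient f u i j" p] a0 a1 t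
      by (simp add: run_rotation_def p_def g_def)
    ultimately show "x \<in> lyndon_starts f u i j" using a1 t by (auto simp: lyndon_starts_def g_def p_def)
  qed
  have "inj_on g {..<q - 1}" using p by (auto simp: g_def inj_on_def)
  then have "q - 1 = card (g ` {..<q - 1})" by (simp add: card_image)
  also have "\<dots> \<le> card (lyndon_starts f u i j)"
    using card_mono[OF finite_subset[OF lyndon_starts_subset[OF r]] sub] by simp
  finally show ?thesis by (simp add: q_def p_def)
qed

lemma exponent_le_card_lyndon_starts:
  assumes r: "is_cubic_run u i j"
  shows "exponent u i j \<le> 2 * real (card (lyndon_starts f u i j))"
proof -
  have rr: "is_run u i j" using r by (simp add: is_cubic_run_def)
  define p where "p = per u i j"
  define L where "L = j - i + 1"
  define q where "q = L div p"
  have p: "0 < p" using is_runD(5)[OF rr] by (simp add: p_def)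
  have q3: "3 \<le> q"
    using r div_le_mono[of "3 * p" L p] p by (simp add: is_cubic_run_def p_def L_def q_def)
  have "L = q * p + L mod p" by (simp add: q_def)
  then have "L < (q + 1) * p" using mod_less_divisor[OF p, of L] by simp
  then have "real L < real (q + 1) * real p" by (metis of_nat_less_iff of_nat_mult)
  then have "real L / real p < real (q + 1)" using p by (simp add: divide_less_eq)
  also have "real (q + 1) \<le> 2 * real (q - 1)" using q3 by linarith
  also have "\<dots> \<le> 2 * real (card (lyndon_starts f u i j))"
    using card_lyndon_starts[OF rr, of f] by (simp add: q_def L_def p_def)
  finally show ?thesis by (simp add: exponent_def L_def p_def)
qed

lemma sum_card_lyndon_starts_le:
  assumes inj: "inj_on f (set u)"
  shows "(\<Sum>(i, j)\<in>{(i, j). is_run u i j}. card (lyndon_starts f u i j)) \<le> length u - 1"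
proof -
  define R where "R = {(i, j). is_run u i j}"
  define S where "S r = lyndon_starts f u (fst r) (snd r)" for r
  have run: "is_run u (fst r) (snd r)" if "r \<in> R" for r
    using that by (auto simp: R_def)
  have "finite R" using finite_runs by (simp add: R_def)
  moreover have "finite (S r)" if "r \<in> R" for r
    using lyndon_starts_subset[OF run[OF that]] unfolding S_def by (rule finite_subset) simp
  moreover have "S r \<inter> S s = {}" if "r \<in> R" "s \<in> R" "r \<noteq> s" for r s
    using lyndon_starts_disjoint[OF inj run[OF that(1)] run[OF that(2)]] that(3)
    by (auto simp: S_def prod_eq_iff)
  ultimately have "(\<Sum>r\<in>R. card (S r)) = card (\<Union>r\<in>R. S r)"
    by (intro card_UN_disjoint[symmetric]) auto
  also have "\<dots> \<le> card {2..length u}"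
  proof (rule card_mono)
    show "(\<Union>r\<in>R. S r) \<subseteq> {2..length u}"
      using lyndon_starts_subset[OF run] unfolding S_def by blast
  qed simp
  finally show ?thesis by (simp add: R_def S_def case_prod_unfold)
qed

lemma sum_exponent_cubic_runs_le:
  "(\<Sum>(i, j)\<in>cubic_runs u. exponent u i j) \<le> 2 * real (length u - 1)"
proof -
  obtain f :: "'a \<Rightarrow> nat" where inj: "inj_on f (set u)"
    using finite_imp_inj_to_nat_seg[of "set u"] by auto
  have "(\<Sum>(i, j)\<in>cubic_runs u. exponent u i j)
      \<le> (\<Sum>(i, j)\<in>cubic_runs u. 2 * real (card (lyndon_starts f u i j)))"
    by (rule sum_mono) (auto simp: cubic_runs_def exponent_le_card_lyndon_starts)
  also have "\<dots> \<le> (\<Sum>(i, j)\<in>{(i, j). is_run u i j}. 2 * real (card (lyndon_starts f u i j)))"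
    by (rule sum_mono2[OF finite_runs]) (auto simp: cubic_runs_def is_cubic_run_def)
  also have "\<dots> = 2 * real (\<Sum>(i, j)\<in>{(i, j). is_run u i j}. card (lyndon_starts f u i j))"
    by (simp add: sum_distrib_left case_prod_unfold)
  also have "\<dots> \<le> 2 * real (length u - 1)"
    by (intro mult_left_mono of_nat_mono sum_card_lyndon_starts_le[OF inj]) simp
  finally show ?thesis .
qed

theorem theorem3:
  fixes u :: "'a list" and \<Sigma> :: "'a set" and n :: nat
  assumes "finite \<Sigma>" and "set u \<subseteq> \<Sigma>" and "length u = n" and "0 < n"
  shows "(\<Sum>(i, j)\<in>cubic_runs u. exponent u i j) < 2.5 * real n"
proof -
  have "(\<Sum>(i, j)\<in>cubic_runs u. exponent u i j) \<le> 2 * real (n - 1)"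
    using sum_exponent_cubic_runs_le assms(3) by blast
  also have "\<dots> < 2.5 * real n" using assms(4) by simp
  finally show ?thesis .
qed

end
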